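(* Let $m\ge1$ and let $\{P^0=I^{\otimes m},P^1,\ldots,P^{2^m-1}\}\subset\mathcal{P}_m$ be a set of distinct Pauli strings with no non-unit prefactors that is closed under multiplication up to constants, i.e. $P^i\ne P^j$ for $i\ne j$ and for all $i,j$ there is $k$ with $P^iP^j\propto P^k$. Then there exists a state $\ket\phi\in(\mathbb{C}^2)^{\otimes m}$ such that $\bra\phi P^i\ket\phi=0$ for all $i\ne0$.
   Context: $\mathcal{P}_m$ is the $m$-qubit Pauli group: all operators $i^\lambda O_1\otimes\cdots\otimes O_m$ with $\lambda\in\{0,1,2,3\}$ and $O_j\in\{I,X,Y,Z\}$; a Pauli string with no non-unit prefactor is one with $\lambda=0$. *)

theory Defs
  imports Complex_Main
begin

text \<open>Single-qubit Pauli operators I, X, Y, Z.  Computational basis states are indexed by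
  bool (False = |0>, True = |1>); pmat O r c is the (r,c) matrix entry of O.\<close>

datatype pauli = PI | PX | PY | PZ

fun pmat :: "pauli \<Rightarrow> bool \<Rightarrow> bool \<Rightarrow> complex" where
  "pmat PI r c = (if r = c then 1 else 0)"
| "pmat PX r c = (if r = c then 0 else 1)"
| "pmat PY r c = (if r = c then 0 else (if r then \<i> else - \<i>))"
| "pmat PZ r c = (if r = c then (if r then -1 else 1) else 0)"

text \<open>Basis of (C^2)^{\<otimes> m}: bit strings of length m.\<close>
definition bitstrings :: "nat \<Rightarrow> bool list set" where
  "bitstrings m = {b. length b = m}"

text \<open>A Pauli string with unit prefactor O_1 \<otimes> ... \<otimes> O_m is a list of length m;
  its matrix entries in the computational basis are products of single-qubit entries.\<close>
definition pstr_entry :: "pauli list \<Rightarrow> bool list \<Rightarrow> bool list \<Rightarrow> complex" where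
  "pstr_entry P b c = (\<Prod>j<length P. pmat (P ! j) (b ! j) (c ! j))"

definition pstr_prod_entry :: "nat \<Rightarrow> pauli list \<Rightarrow> pauli list \<Rightarrow> bool list \<Rightarrow> bool list \<Rightarrow> complex" where
  "pstr_prod_entry m P Q b c = (\<Sum>d\<in>bitstrings m. pstr_entry P b d * pstr_entry Q d c)"

definition prop_to :: "nat \<Rightarrow> (bool list \<Rightarrow> bool list \<Rightarrow> complex) \<Rightarrow> pauli list \<Rightarrow> bool" where
  "prop_to m A R = (\<exists>s::complex. \<forall>b\<in>bitstrings m. \<forall>c\<in>bitstrings m. A b c = s * pstr_entry R b c)"

definition expval :: "nat \<Rightarrow> pauli list \<Rightarrow> (bool list \<Rightarrow> complex) \<Rightarrow> complex" where
  "expval m P \<phi> = (\<Sum>b\<in>bitstrings m. \<Sum>c\<in>bitstrings m. cnj (\<phi> b) * pstr_entry P b c * \<phi> c)"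

definition is_state :: "nat \<Rightarrow> (bool list \<Rightarrow> complex) \<Rightarrow> bool" where
  "is_state m \<phi> = ((\<Sum>b\<in>bitstrings m. (cmod (\<phi> b))\<^sup>2) = 1)"

end

theory Submission
  imports Defs
begin

text \<open>
  Consider the states whose amplitudes are \<open>2^{-m/2} i^{d\<cdot>b} (-1)^{q(b)}\<close> with
  \<open>d \<in> {0,1}^m\<close> and \<open>q\<close> a quadratic form without diagonal terms (graph states
  dressed with local phase gates). All their amplitudes have the same modulus, so every
  diagonal Pauli string other than the identity has expectation zero. For a string
  \<open>X^x Z^z\<close> with \<open>x \<noteq> 0\<close> the expectation is nonzero only if \<open>z\<close> equals a surjective
  linear function of the parameters \<open>(d,q)\<close>, which happens for at most a fraction \<open>2^{-m}\<close>
  of them. A union bound over the at most \<open>2^m - 1\<close> non-identity strings leaves a state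
  annihilating all of them.
\<close>

section \<open>Bit strings and signs\<close>

fun bits_dot :: "bool list \<Rightarrow> bool list \<Rightarrow> bool" where
  "bits_dot (a # as) (b # bs) = ((a \<and> b) \<noteq> bits_dot as bs)"
| "bits_dot _ _ = False"

fun bits_xor :: "bool list \<Rightarrow> bool list \<Rightarrow> bool list" where
  "bits_xor (a # as) (b # bs) = (a \<noteq> b) # bits_xor as bs"
| "bits_xor _ _ = []"

definition neg_one_pow :: "bool \<Rightarrow> complex" where
  "neg_one_pow t = (if t then -1 else 1)"

definition i_pow :: "bool \<Rightarrow> complex" where
  "i_pow d = (if d then \<i> else 1)"

lemma length_bits_xor [simp]: "length (bits_xor a b) = min (length a) (length b)"
  by (induction a b rule: bits_xor.induct) auto

lemma bits_dot_commute: "bits_dot a b = bits_dot b a"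
  by (induction a b rule: bits_dot.induct) auto

lemma bits_dot_replicate_False [simp]: "bits_dot c (replicate n False) = False"
proof (induction c arbitrary: n)
  case (Cons a c)
  then show ?case by (cases n) auto
qed simp

lemma bits_dot_xor_right:
  "length c = length b \<Longrightarrow> length b = length x \<Longrightarrow>
   bits_dot c (bits_xor b x) = (bits_dot c b \<noteq> bits_dot c x)"
proof (induction c arbitrary: b x)
  case (Cons a c)
  then obtain \<beta> b' \<xi> x' where "b = \<beta> # b'" "x = \<xi> # x'"
    by (metis length_Suc_conv)
  with Cons show ?case by auto
qed simp

lemma bits_dot_xor_left:
  "length z = length y \<Longrightarrow> length c = length y \<Longrightarrow>
   bits_dot (bits_xor z c) y = (bits_dot z y \<noteq> bits_dot c y)"
  using bits_dot_xor_right[of y z c] by (simp add: bits_dot_commute)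

lemma bits_xor_replicate_False [simp]: "length b = n \<Longrightarrow> bits_xor b (replicate n False) = b"
  by (induction b arbitrary: n) auto

lemma bits_xor_eq_replicate_False:
  "length z = length c \<Longrightarrow> bits_xor z c = replicate (length z) False \<Longrightarrow> c = z"
proof (induction z arbitrary: c)
  case (Cons a z)
  then obtain \<gamma> c' where "c = \<gamma> # c'"
    by (metis length_Suc_conv)
  with Cons show ?case by auto
qed simp

lemma neg_one_pow_xor: "neg_one_pow (a = (\<not> b)) = neg_one_pow a * neg_one_pow b"
  by (simp add: neg_one_pow_def)

lemma neg_one_pow_bits_dot_xor_right:
  "length c = length b \<Longrightarrow> length b = length x \<Longrightarrow>
   neg_one_pow (bits_dot c (bits_xor b x)) = neg_one_pow (bits_dot c b) * neg_one_pow (bits_dot c x)"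
  by (simp add: bits_dot_xor_right neg_one_pow_xor)

lemma neg_one_pow_bits_dot_xor_left:
  "length z = length y \<Longrightarrow> length c = length y \<Longrightarrow>
   neg_one_pow (bits_dot (bits_xor z c) y) = neg_one_pow (bits_dot z y) * neg_one_pow (bits_dot c y)"
  by (simp add: bits_dot_xor_left neg_one_pow_xor)

lemma neg_one_pow_mult_self_left [simp]: "neg_one_pow a * (neg_one_pow a * y) = y"
  by (simp add: neg_one_pow_def)

lemma cnj_neg_one_pow [simp]: "cnj (neg_one_pow a) = neg_one_pow a"
  by (simp add: neg_one_pow_def)

lemma norm_neg_one_pow [simp]: "cmod (neg_one_pow a) = 1"
  by (simp add: neg_one_pow_def)

lemma i_pow_mult_cnj_left [simp]: "i_pow d * (cnj (i_pow d) * y) = y"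
  by (simp add: i_pow_def)

lemma norm_i_pow [simp]: "cmod (i_pow d) = 1"
  by (simp add: i_pow_def)

lemma sum_UNIV_bool: "(\<Sum>\<beta>\<in>UNIV. f \<beta>) = f True + f False"
  by (simp add: UNIV_bool add.commute)

lemma bitstrings_Suc: "bitstrings (Suc n) = (\<lambda>(\<beta>, b). \<beta> # b) ` (UNIV \<times> bitstrings n)"
  by (auto simp: bitstrings_def image_def length_Suc_conv)

lemma finite_bitstrings [simp]: "finite (bitstrings n)"
  by (induction n) (simp_all add: bitstrings_Suc, simp add: bitstrings_def)

lemma inj_on_Cons_pair: "inj_on (\<lambda>(\<beta>, b). \<beta> # b) A"
  by (auto simp: inj_on_def)

lemma card_bitstrings [simp]: "card (bitstrings n) = 2 ^ n"
  by (induction n)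
    (simp_all add: bitstrings_def[of 0] bitstrings_Suc card_image[OF inj_on_Cons_pair]
      card_cartesian_product)

lemma sum_bitstrings_Suc:
  "(\<Sum>b\<in>bitstrings (Suc n). f b) = (\<Sum>\<beta>\<in>UNIV. \<Sum>b\<in>bitstrings n. f (\<beta> # b))"
  unfolding bitstrings_Suc sum.reindex[OF inj_on_Cons_pair]
  by (simp add: sum.cartesian_product split_beta)

lemma card_bitstrings_Suc_filter:
  "card {b \<in> bitstrings (Suc n). P b} =
   card {b \<in> bitstrings n. P (True # b)} + card {b \<in> bitstrings n. P (False # b)}"
proof -
  have card_eq: "card {b \<in> bitstrings k. Q b} = (\<Sum>b\<in>bitstrings k. of_bool (Q b))" for k Q
    by (simp add: Int_def)
  show ?thesis
    unfolding card_eq sum_bitstrings_Suc sum_UNIV_bool ..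
qed

lemma card_bits_dot_eq:
  assumes "x \<in> bitstrings n" "x \<noteq> replicate n False"
  shows "card {c \<in> bitstrings n. bits_dot c x = t} * 2 = 2 ^ n"
  using assms
proof (induction n arbitrary: x t)
  case 0
  then show ?case by (simp add: bitstrings_def)
next
  case (Suc n)
  then obtain \<xi> x' where x: "x = \<xi> # x'" and x': "x' \<in> bitstrings n"
    by (auto simp: bitstrings_def length_Suc_conv)
  show ?case
  proof (cases "x' = replicate n False")
    case False
    have "{c \<in> bitstrings n. bits_dot (True # c) x = t} = {c \<in> bitstrings n. bits_dot c x' = (\<xi> \<noteq> t)}"
      by (auto simp: x)
    then show ?thesis
      using Suc.IH[OF x' False, of t] Suc.IH[OF x' False, of "\<xi> \<noteq> t"]
      by (simp add: card_bitstrings_Suc_filter x)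
  next
    case True
    with Suc.prems x have "\<xi>" by auto
    then show ?thesis
      by (cases t) (simp_all add: card_bitstrings_Suc_filter x True)
  qed
qed

section \<open>Pauli strings\<close>

definition x_part :: "pauli list \<Rightarrow> bool list" where
  "x_part P = map (\<lambda>Q. Q = PX \<or> Q = PY) P"

definition z_part :: "pauli list \<Rightarrow> bool list" where
  "z_part P = map (\<lambda>Q. Q = PY \<or> Q = PZ) P"

fun y_phase :: "pauli list \<Rightarrow> complex" where
  "y_phase [] = 1"
| "y_phase (Q # P) = (if Q = PY then \<i> else 1) * y_phase P"

lemma pstr_entry_Cons: "pstr_entry (Q # P) (\<beta> # b) (\<gamma> # c) = pmat Q \<beta> \<gamma> * pstr_entry P b c"
  unfolding pstr_entry_def length_Cons prod.lessThan_Suc_shift by simp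

text \<open>Since \<open>Y = i X Z\<close>, every Pauli string is \<open>y_phase P \<cdot> X^x Z^z\<close> with \<open>x = x_part P\<close> and
  \<open>z = z_part P\<close>.\<close>
lemma pstr_entry_eq:
  "length b = length P \<Longrightarrow> length c = length P \<Longrightarrow>
   pstr_entry P b c =
     (if c = bits_xor b (x_part P) then y_phase P * neg_one_pow (bits_dot (z_part P) c) else 0)"
proof (induction P arbitrary: b c)
  case Nil
  then show ?case by (simp add: pstr_entry_def x_part_def neg_one_pow_def)
next
  case (Cons Q P)
  then obtain \<beta> b' \<gamma> c' where bc: "b = \<beta> # b'" "c = \<gamma> # c'"
    by (metis length_Suc_conv)
  with Cons.prems have "length b' = length P" "length c' = length P" by auto
  from Cons.IH[OF this] show ?case
    by (cases Q; cases \<beta>; cases \<gamma>;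
        simp add: bc pstr_entry_Cons x_part_def z_part_def neg_one_pow_def)
qed

lemma identity_if_parts_zero:
  "x_part P = replicate (length P) False \<Longrightarrow> z_part P = replicate (length P) False \<Longrightarrow>
   P = replicate (length P) PI"
proof (induction P)
  case (Cons Q P)
  then show ?case by (cases Q) (auto simp: x_part_def z_part_def)
qed simp

text \<open>\<open>xz_expval n x z \<phi>\<close> is \<open>\<langle>\<phi>| X^x Z^z |\<phi>\<rangle>\<close>.\<close>
definition xz_expval :: "nat \<Rightarrow> bool list \<Rightarrow> bool list \<Rightarrow> (bool list \<Rightarrow> complex) \<Rightarrow> complex" where
  "xz_expval n x z \<phi> =
     (\<Sum>b\<in>bitstrings n. cnj (\<phi> b) * neg_one_pow (bits_dot z (bits_xor b x)) * \<phi> (bits_xor b x))"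

lemma expval_eq_xz_expval:
  assumes "length P = m"
  shows "expval m P \<phi> = y_phase P * xz_expval m (x_part P) (z_part P) \<phi>"
proof -
  have "(\<Sum>c\<in>bitstrings m. cnj (\<phi> b) * pstr_entry P b c * \<phi> c) =
      y_phase P * (cnj (\<phi> b) * neg_one_pow (bits_dot (z_part P) (bits_xor b (x_part P))) *
        \<phi> (bits_xor b (x_part P)))"
    if b: "b \<in> bitstrings m" for b
  proof -
    have "(\<Sum>c\<in>bitstrings m. cnj (\<phi> b) * pstr_entry P b c * \<phi> c) =
        (\<Sum>c\<in>bitstrings m. if c = bits_xor b (x_part P)
           then cnj (\<phi> b) * (y_phase P * neg_one_pow (bits_dot (z_part P) c)) * \<phi> c else 0)"
      by (rule sum.cong) (use b assms in \<open>simp_all add: pstr_entry_eq bitstrings_def\<close>)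
    moreover have "bits_xor b (x_part P) \<in> bitstrings m"
      using b assms by (simp add: bitstrings_def x_part_def)
    ultimately show ?thesis
      by (simp add: sum.delta' mult_ac)
  qed
  then show ?thesis
    unfolding expval_def xz_expval_def sum_distrib_left by (rule sum.cong[OF refl])
qed

lemma xz_expval_divide:
  "xz_expval n x z (\<lambda>b. \<phi> b / c) = xz_expval n x z \<phi> / (cnj c * c)"
  unfolding xz_expval_def by (simp add: sum_divide_distrib)

lemma xz_expval_diagonal_eq_0:
  assumes unimodular: "\<forall>b\<in>bitstrings n. cmod (\<phi> b) = 1"
    and z: "z \<in> bitstrings n" "z \<noteq> replicate n False"
  shows "xz_expval n (replicate n False) z \<phi> = 0"
proof -
  have "xz_expval n (replicate n False) z \<phi> = (\<Sum>b\<in>bitstrings n. neg_one_pow (bits_dot b z))"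
    unfolding xz_expval_def
  proof (rule sum.cong[OF refl])
    fix b assume b: "b \<in> bitstrings n"
    then have "cnj (\<phi> b) * \<phi> b = 1"
      using unimodular complex_norm_square[of "\<phi> b"] by (simp add: mult.commute)
    with b show "cnj (\<phi> b) * neg_one_pow (bits_dot z (bits_xor b (replicate n False))) *
        \<phi> (bits_xor b (replicate n False)) = neg_one_pow (bits_dot b z)"
      by (simp add: bitstrings_def bits_dot_commute mult_ac)
  qed
  also have "\<dots> = (\<Sum>b\<in>bitstrings n. of_bool (bits_dot b z = False) - of_bool (bits_dot b z = True))"
    by (rule sum.cong) (simp_all add: neg_one_pow_def)
  also have "\<dots> = of_nat (card {b \<in> bitstrings n. bits_dot b z = False})
                 - of_nat (card {b \<in> bitstrings n. bits_dot b z = True})"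
    by (simp add: sum_subtractf Int_def)
  also have "\<dots> = 0"
    using card_bits_dot_eq[OF z, of False] card_bits_dot_eq[OF z, of True] by simp
  finally show ?thesis .
qed

section \<open>Phase states\<close>

text \<open>\<open>phase_state [(d\<^sub>1, c\<^sub>1), \<dots>, (d\<^sub>n, c\<^sub>n)] b\<close> is the product over the qubits \<open>j\<close>
  with \<open>b\<^sub>j\<close> set of \<open>i^{d\<^sub>j} (-1)^{c\<^sub>j \<cdot> (b\<^sub>j\<^sub>+\<^sub>1, \<dots>, b\<^sub>n)}\<close>, i.e. the amplitude
  \<open>i^{d\<cdot>b} (-1)^{\<Sum>\<^sub>j\<^sub><\<^sub>k C\<^sub>j\<^sub>k b\<^sub>j b\<^sub>k}\<close> with the strictly upper triangular matrix \<open>C\<close> stored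
  row by row.\<close>
fun phase_state :: "(bool \<times> bool list) list \<Rightarrow> bool list \<Rightarrow> complex" where
  "phase_state ((d, c) # g) (\<beta> # b) =
     (if \<beta> then i_pow d * neg_one_pow (bits_dot c b) else 1) * phase_state g b"
| "phase_state _ _ = 1"

fun phase_params :: "nat \<Rightarrow> (bool \<times> bool list) list set" where
  "phase_params 0 = {[]}"
| "phase_params (Suc n) = (\<lambda>(d, c, g). (d, c) # g) ` (UNIV \<times> bitstrings n \<times> phase_params n)"

lemma norm_phase_state: "cmod (phase_state g b) = 1"
  by (induction g b rule: phase_state.induct) (auto simp: norm_mult)

lemma is_state_phase_state: "is_state n (\<lambda>b. phase_state g b / complex_of_real (sqrt (2 ^ n)))"
proof -
  have "(\<Sum>b\<in>bitstrings n. (cmod (phase_state g b / complex_of_real (sqrt (2 ^ n))))\<^sup>2) =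
      (\<Sum>b\<in>bitstrings n. 1 / 2 ^ n)"
    by (intro sum.cong refl) (simp add: norm_divide norm_phase_state power_divide)
  then show ?thesis
    by (simp add: is_state_def)
qed

lemma finite_phase_params [simp]: "finite (phase_params n)"
  by (induction n) auto

lemma inj_on_Cons_param: "inj_on (\<lambda>(d, c, g). (d, c) # g) A"
  by (auto simp: inj_on_def)

lemma card_phase_params_Suc: "card (phase_params (Suc n)) = 2 * 2 ^ n * card (phase_params n)"
  by (simp add: card_image[OF inj_on_Cons_param] card_cartesian_product)

lemma card_phase_params_pos: "card (phase_params n) > 0"
  by (induction n) (simp_all add: card_phase_params_Suc del: phase_params.simps(2))

lemma sum_phase_params_Suc:
  "(\<Sum>g\<in>phase_params (Suc n). f g) =
   (\<Sum>d\<in>UNIV. \<Sum>c\<in>bitstrings n. \<Sum>g\<in>phase_params n. f ((d, c) # g))"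
  unfolding phase_params.simps sum.reindex[OF inj_on_Cons_param]
  by (simp add: sum.cartesian_product split_beta)

lemma card_phase_params_Suc_filter:
  "card {g \<in> phase_params (Suc n). P g} =
   (\<Sum>d\<in>UNIV. \<Sum>c\<in>bitstrings n. card {g \<in> phase_params n. P ((d, c) # g)})"
proof -
  have card_eq: "card {g \<in> phase_params k. Q g} = (\<Sum>g\<in>phase_params k. of_bool (Q g))" for k Q
    by (simp add: Int_def)
  show ?thesis
    unfolding card_eq sum_phase_params_Suc ..
qed

lemma xz_expval_phase_state_Cons_False:
  assumes x: "x \<in> bitstrings n" and c: "c \<in> bitstrings n"
  shows "xz_expval (Suc n) (False # x) (\<zeta> # z) (phase_state ((d, c) # g)) =
    (1 + neg_one_pow \<zeta> * neg_one_pow (bits_dot c x)) * xz_expval n x z (phase_state g)"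
proof -
  define t where "t b = cnj (phase_state g b) * neg_one_pow (bits_dot z (bits_xor b x)) *
    phase_state g (bits_xor b x)" for b
  have "xz_expval (Suc n) (False # x) (\<zeta> # z) (phase_state ((d, c) # g)) =
      (\<Sum>b\<in>bitstrings n. neg_one_pow \<zeta> * neg_one_pow (bits_dot c x) * t b) + (\<Sum>b\<in>bitstrings n. t b)"
    unfolding xz_expval_def sum_bitstrings_Suc sum_UNIV_bool
  proof (intro arg_cong2[where f="(+)"] sum.cong refl, goal_cases)
    case (1 b)
    then have "neg_one_pow (bits_dot c (bits_xor b x)) =
        neg_one_pow (bits_dot c b) * neg_one_pow (bits_dot c x)"
      using x c by (simp add: bitstrings_def neg_one_pow_bits_dot_xor_right)
    then show ?case by (simp add: t_def neg_one_pow_xor mult_ac)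
  next
    case (2 b)
    then show ?case by (simp add: t_def)
  qed
  then show ?thesis
    by (simp add: xz_expval_def t_def sum_distrib_left[symmetric] distrib_right)
qed

lemma xz_expval_phase_state_Cons_True:
  assumes x: "x \<in> bitstrings n" and z: "z \<in> bitstrings n" and c: "c \<in> bitstrings n"
  shows "xz_expval (Suc n) (True # x) (\<zeta> # z) (phase_state ((d, c) # g)) =
    (neg_one_pow \<zeta> * i_pow d + cnj (i_pow d) * neg_one_pow (bits_dot c x)) *
      xz_expval n x (bits_xor z c) (phase_state g)"
proof -
  define t where "t b = cnj (phase_state g b) * neg_one_pow (bits_dot (bits_xor z c) (bits_xor b x)) *
    phase_state g (bits_xor b x)" for b
  have signs: "neg_one_pow (bits_dot c (bits_xor b x)) =
        neg_one_pow (bits_dot c b) * neg_one_pow (bits_dot c x)"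
      "neg_one_pow (bits_dot (bits_xor z c) (bits_xor b x)) =
        neg_one_pow (bits_dot z (bits_xor b x)) * neg_one_pow (bits_dot c (bits_xor b x))"
    if "b \<in> bitstrings n" for b
    using that x z c
    by (simp_all add: bitstrings_def neg_one_pow_bits_dot_xor_right neg_one_pow_bits_dot_xor_left)
  have "xz_expval (Suc n) (True # x) (\<zeta> # z) (phase_state ((d, c) # g)) =
      (\<Sum>b\<in>bitstrings n. cnj (i_pow d) * neg_one_pow (bits_dot c x) * t b) +
      (\<Sum>b\<in>bitstrings n. neg_one_pow \<zeta> * i_pow d * t b)"
    unfolding xz_expval_def sum_bitstrings_Suc sum_UNIV_bool
  proof (intro arg_cong2[where f="(+)"] sum.cong refl, goal_cases)
    case (1 b)
    then show ?case by (simp add: t_def signs neg_one_pow_xor mult_ac)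
  next
    case (2 b)
    then show ?case by (simp add: t_def signs(2) neg_one_pow_xor mult_ac)
  qed
  then show ?thesis
    by (simp add: xz_expval_def t_def sum_distrib_left[symmetric] distrib_right add.commute)
qed

section \<open>The counting argument\<close>

definition nonvanishing_params :: "nat \<Rightarrow> bool list \<Rightarrow> bool list \<Rightarrow> (bool \<times> bool list) list set" where
  "nonvanishing_params n x z = {g \<in> phase_params n. xz_expval n x z (phase_state g) \<noteq> 0}"

lemma nonvanishing_params_diagonal:
  "z \<in> bitstrings n \<Longrightarrow> z \<noteq> replicate n False \<Longrightarrow> nonvanishing_params n (replicate n False) z = {}"
  by (simp add: nonvanishing_params_def xz_expval_diagonal_eq_0 norm_phase_state)

lemma card_nonvanishing_params_Cons_False:
  assumes x: "x \<in> bitstrings n"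
  shows "card (nonvanishing_params (Suc n) (False # x) (\<zeta> # z)) =
    2 * (card {c \<in> bitstrings n. bits_dot c x = \<zeta>} * card (nonvanishing_params n x z))"
proof -
  have slice: "card {g \<in> phase_params n.
        xz_expval (Suc n) (False # x) (\<zeta> # z) (phase_state ((d, c) # g)) \<noteq> 0} =
      (if bits_dot c x = \<zeta> then card (nonvanishing_params n x z) else 0)"
    if "c \<in> bitstrings n" for d c
    using that x
    by (simp add: xz_expval_phase_state_Cons_False nonvanishing_params_def neg_one_pow_def)
  have "card (nonvanishing_params (Suc n) (False # x) (\<zeta> # z)) =
      (\<Sum>d\<in>(UNIV :: bool set). \<Sum>c\<in>bitstrings n. if bits_dot c x = \<zeta> then card (nonvanishing_params n x z) else 0)"
    unfolding nonvanishing_params_def[of "Suc n"] card_phase_params_Suc_filter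
    by (intro sum.cong refl) (erule slice)
  then show ?thesis
    by (simp add: sum.If_cases Int_def)
qed

lemma card_nonvanishing_params_Cons_True:
  assumes x: "x \<in> bitstrings n" and z: "z \<in> bitstrings n"
  shows "card (nonvanishing_params (Suc n) (True # x) (\<zeta> # z)) =
    (\<Sum>c\<in>bitstrings n. card (nonvanishing_params n x (bits_xor z c)))"
proof -
  have coefficient: "neg_one_pow \<zeta> * i_pow d + cnj (i_pow d) * neg_one_pow a \<noteq> 0 \<longleftrightarrow> d = (\<zeta> \<noteq> a)"
    for d a
    by (cases d; cases \<zeta>; cases a; simp add: neg_one_pow_def i_pow_def)
  have slice: "card {g \<in> phase_params n.
        xz_expval (Suc n) (True # x) (\<zeta> # z) (phase_state ((d, c) # g)) \<noteq> 0} =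
      (if d = (\<zeta> \<noteq> bits_dot c x) then card (nonvanishing_params n x (bits_xor z c)) else 0)"
    if "c \<in> bitstrings n" for d c
    using that x z coefficient
    by (simp add: xz_expval_phase_state_Cons_True nonvanishing_params_def)
  have "card (nonvanishing_params (Suc n) (True # x) (\<zeta> # z)) =
      (\<Sum>d\<in>UNIV. \<Sum>c\<in>bitstrings n.
        if d = (\<zeta> \<noteq> bits_dot c x) then card (nonvanishing_params n x (bits_xor z c)) else 0)"
    unfolding nonvanishing_params_def[of "Suc n"] card_phase_params_Suc_filter
    by (intro sum.cong refl) (erule slice)
  also have "\<dots> = (\<Sum>c\<in>bitstrings n. card (nonvanishing_params n x (bits_xor z c)))"
    by (subst sum.swap) (simp only: sum.delta finite_UNIV UNIV_I if_True)
  finally show ?thesis .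
qed

lemma card_nonvanishing_params_le:
  assumes "x \<in> bitstrings n" "z \<in> bitstrings n" "x \<noteq> replicate n False"
  shows "card (nonvanishing_params n x z) * 2 ^ n \<le> card (phase_params n)"
  using assms
proof (induction n arbitrary: x z)
  case 0
  then show ?case by (simp add: bitstrings_def)
next
  case (Suc n)
  then obtain \<xi> x' \<zeta> z' where x: "x = \<xi> # x'" and x': "x' \<in> bitstrings n"
    and z: "z = \<zeta> # z'" and z': "z' \<in> bitstrings n"
    by (auto simp: bitstrings_def length_Suc_conv)
  define K where "K = card (phase_params n)"
  have xor_z': "bits_xor z' c \<in> bitstrings n" if "c \<in> bitstrings n" for c
    using that z' by (simp add: bitstrings_def)
  consider "\<not> \<xi>" | "\<xi>" "x' \<noteq> replicate n False" | "\<xi>" "x' = replicate n False"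
    by blast
  then have "card (nonvanishing_params (Suc n) x z) * 2 ^ n \<le> 2 ^ n * K"
  proof cases
    case 1
    with Suc.prems x have x'_nonzero: "x' \<noteq> replicate n False" by auto
    have "card (nonvanishing_params (Suc n) x z) * 2 ^ n =
        (card {c \<in> bitstrings n. bits_dot c x' = \<zeta>} * 2) * (card (nonvanishing_params n x' z') * 2 ^ n)"
      using 1 by (simp add: x z card_nonvanishing_params_Cons_False[OF x'])
    also have "\<dots> \<le> 2 ^ n * K"
      using Suc.IH[OF x' z' x'_nonzero] card_bits_dot_eq[OF x' x'_nonzero] by (simp add: K_def)
    finally show ?thesis .
  next
    case 2
    have "card (nonvanishing_params (Suc n) x z) * 2 ^ n =
        (\<Sum>c\<in>bitstrings n. card (nonvanishing_params n x' (bits_xor z' c)) * 2 ^ n)"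
      using 2 by (simp add: x z card_nonvanishing_params_Cons_True[OF x' z'] sum_distrib_right)
    also have "\<dots> \<le> (\<Sum>c\<in>bitstrings n. K)"
      using Suc.IH[OF x' xor_z' 2(2)] by (intro sum_mono) (simp add: K_def)
    finally show ?thesis by simp
  next
    case 3
    \<comment> \<open>Only \<open>c = z'\<close> contributes: for the others the remaining string is diagonal.\<close>
    have vanish: "card (nonvanishing_params n x' (bits_xor z' c)) = 0"
      if "c \<in> bitstrings n" "c \<noteq> z'" for c
    proof -
      have "bits_xor z' c \<noteq> replicate n False"
        using that z' bits_xor_eq_replicate_False[of z' c] by (auto simp: bitstrings_def)
      then show ?thesis
        using nonvanishing_params_diagonal[OF xor_z'[OF that(1)]] 3(2) by simp
    qed
    have "card (nonvanishing_params (Suc n) x z) =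
        (\<Sum>c\<in>bitstrings n. card (nonvanishing_params n x' (bits_xor z' c)))"
      using 3(1) by (simp add: x z card_nonvanishing_params_Cons_True[OF x' z'])
    also have "\<dots> = card (nonvanishing_params n x' (bits_xor z' z'))"
      by (subst sum.remove[OF finite_bitstrings z']) (simp add: vanish sum.neutral)
    also have "\<dots> \<le> K"
      unfolding K_def nonvanishing_params_def by (intro card_mono) auto
    finally show ?thesis by simp
  qed
  then show ?case
    by (simp add: card_phase_params_Suc K_def del: phase_params.simps(2))
qed

lemma exists_phase_param_vanishing:
  assumes "finite A" and A: "A \<subseteq> bitstrings n \<times> bitstrings n"
    and nontrivial: "(replicate n False, replicate n False) \<notin> A" and "card A < 2 ^ n"
  shows "\<exists>g\<in>phase_params n. \<forall>(x, z)\<in>A. xz_expval n x z (phase_state g) = 0"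
proof -
  define K where "K = card (phase_params n)"
  define bad where "bad a = nonvanishing_params n (fst a) (snd a)" for a
  have bound: "card (bad a) * 2 ^ n \<le> K" if "a \<in> A" for a
  proof (cases "fst a = replicate n False")
    case True
    with that A nontrivial have "snd a \<in> bitstrings n" "snd a \<noteq> replicate n False"
      by (auto simp: mem_Times_iff prod_eq_iff)
    with True show ?thesis by (simp add: bad_def nonvanishing_params_diagonal)
  next
    case False
    with that A show ?thesis
      unfolding bad_def K_def by (intro card_nonvanishing_params_le) (auto simp: mem_Times_iff)
  qed
  have "card (\<Union>a\<in>A. bad a) * 2 ^ n \<le> (\<Sum>a\<in>A. card (bad a) * 2 ^ n)"
    using card_UN_le[OF \<open>finite A\<close>, of bad] by (simp add: sum_distrib_right[symmetric])
  also have "\<dots> \<le> card A * K"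
    using sum_mono[OF bound] by simp
  also have "\<dots> < 2 ^ n * K"
    using \<open>card A < 2 ^ n\<close> card_phase_params_pos by (simp add: K_def)
  finally have "card (\<Union>a\<in>A. bad a) < card (phase_params n)"
    by (simp add: K_def)
  moreover have "finite (\<Union>a\<in>A. bad a)"
    using \<open>finite A\<close> by (simp add: bad_def nonvanishing_params_def)
  ultimately have "\<not> phase_params n \<subseteq> (\<Union>a\<in>A. bad a)"
    using card_mono leD by blast
  then show ?thesis
    by (auto simp: bad_def nonvanishing_params_def split_beta)
qed

lemma exists_state_expval_eq_0:
  assumes "finite S" "card S < 2 ^ m" and lengths: "\<forall>Q\<in>S. length Q = m"
    and "replicate m PI \<notin> S"
  shows "\<exists>\<phi>. is_state m \<phi> \<and> (\<forall>Q\<in>S. expval m Q \<phi> = 0)"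
proof -
  define parts where "parts Q = (x_part Q, z_part Q)" for Q
  have "parts ` S \<subseteq> bitstrings m \<times> bitstrings m"
    using lengths by (auto simp: parts_def bitstrings_def x_part_def z_part_def)
  moreover have "(replicate m False, replicate m False) \<notin> parts ` S"
    using lengths \<open>replicate m PI \<notin> S\<close> identity_if_parts_zero by (fastforce simp: parts_def)
  moreover have "card (parts ` S) < 2 ^ m"
    using card_image_le[OF \<open>finite S\<close>, of parts] \<open>card S < 2 ^ m\<close> by simp
  ultimately obtain g where g: "\<forall>Q\<in>S. xz_expval m (x_part Q) (z_part Q) (phase_state g) = 0"
    using exists_phase_param_vanishing[of "parts ` S" m] \<open>finite S\<close> by (auto simp: parts_def)
  define \<phi> where "\<phi> b = phase_state g b / complex_of_real (sqrt (2 ^ m))" for b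
  have "is_state m \<phi>"
    unfolding \<phi>_def by (rule is_state_phase_state)
  moreover have "expval m Q \<phi> = 0" if "Q \<in> S" for Q
    using that g lengths unfolding \<phi>_def by (simp add: expval_eq_xz_expval xz_expval_divide)
  ultimately show ?thesis by blast
qed

theorem mainTheorem14:
  fixes m :: nat and P :: "nat \<Rightarrow> pauli list"
  assumes "m \<ge> 1"
    and "\<forall>i<2^m. length (P i) = m"
    and "P 0 = replicate m PI"
    and "inj_on P {..<2^m}"
    and "\<forall>i<2^m. \<forall>j<2^m. \<exists>k<2^m. prop_to m (pstr_prod_entry m (P i) (P j)) (P k)"
  shows "\<exists>\<phi>. is_state m \<phi> \<and> (\<forall>i. 0 < i \<and> i < 2^m \<longrightarrow> expval m (P i) \<phi> = 0)"
proof -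
  have "card (P ` {1..<2^m}) < 2 ^ m"
    by (rule le_less_trans[OF card_image_le]) simp_all
  moreover have "replicate m PI \<notin> P ` {1..<2^m}"
  proof
    assume "replicate m PI \<in> P ` {1..<2^m}"
    then obtain i where "i \<in> {1..<2^m}" "P i = P 0"
      using assms(3) by auto
    then show False
      using inj_onD[OF assms(4), of i 0] by simp
  qed
  ultimately obtain \<phi> where "is_state m \<phi>" "\<forall>Q\<in>P ` {1..<2^m}. expval m Q \<phi> = 0"
    using exists_state_expval_eq_0[of "P ` {1..<2^m}" m] assms(2) by auto
  then show ?thesis by auto
qed

end
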